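(* Let $n=m+s$ and consider the system $$\begin{bmatrix}\dot x_a\\ \dot x_u\end{bmatrix}=[J(x)-R(x)]\begin{bmatrix}\nabla_{x_a}\mathcal H(x)\\ \nabla_{x_u}\mathcal H(x)\end{bmatrix}+\begin{bmatrix}u-d_a(x)\\ 0_{s\times 1}\end{bmatrix},$$ with $x=\operatorname{col}(x_a,x_u)$, $x_a\in\mathbb R^m$, $x_u\in\mathbb R^s$, $u\in\mathbb R^m$, smooth $\mathcal H:\mathbb R^n\to\mathbb R_+$ having an isolated minimum at $x^\star=(x_a^\star,x_u^\star)$, and $J=\begin{bmatrix}J_{aa}&J_{au}\\-J_{au}^\top&J_{uu}\end{bmatrix}=-J^\top$, $R=\begin{bmatrix}R_{aa}&R_{au}\\R_{au}^\top&R_{uu}\end{bmatrix}=R^\top\ge0$ (possibly state-dependent). Assume the matched disturbance satisfies $d_a(x)=G_d(x)\bar d_a$ with $\bar d_a\in\mathbb R^m$ constant and $G_d:\mathbb R^n\to\mathbb R^{m\times m}$ full rank with $G_d<0$. Let $K_i\in\mathbb R^{m\times m}$ be symmetric positive definite, and choose $$J_{c_1}=\tfrac12(G_d-G_d^\top),\quad R_{c_1}=-\tfrac12(G_d+G_d^\top),\quad R_{c_2}>0.$$ Close the loop with $$u=[-J_{aa}+R_{aa}+J_{c_1}-R_{c_1}-R_{c_2}]\nabla_{x_a}\mathcal H+[J_{c_1}-R_{c_1}]K_i(x_a-x_c)+2R_{au}\nabla_{x_u}\mathcal H,$$ $$\dot x_c=-R_{c_2}\nabla_{x_a}\mathcal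 H+(J_{au}+R_{au})\nabla_{x_u}\mathcal H,\qquad x_c\in\mathbb R^m,$$ and write the closed loop in the coordinates $w=(w_a,w_u,w_c)=(x_a,x_u,x_a-x_c)$. Let $\mathcal H_{cl}(w)=\mathcal H(w_a,w_u)+\tfrac12 w_c^\top K_iw_c$. Then: (i) $\bar w:=(x_a^\star,x_u^\star,K_i^{-1}\bar d_a)$ is a stable equilibrium of the closed-loop system; (ii) if the signal $Y_a:=\operatorname{col}(\nabla_{w_a}\mathcal H_{cl},\ w_c-\bar w_c)$, where $\bar w_c=K_i^{-1}\bar d_a$, is a detectable output of the closed loop, then the equilibrium $\bar w$ is asymptotically stable; (iii) the stability properties are global if $\mathcal H$ is radially unbounded.
   Context: $\nabla$ denotes the transposed gradient and $\nabla_{x_a},\nabla_{x_u}$ (resp. $\nabla_{w_a}$) transposed partial gradients. $G_d<0$ means $G_d$ is sign definite (negative definite, i.e. $v^\top G_d v<0$ for $v\neq0$). "Detectable output" means that closed-loop solutions along which the output is identically zero converge to the equilibrium. All functions are smooth. *)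

theory Defs
  imports "HOL-Analysis.Analysis"
begin

text \<open>A real function on R^n is smooth iff it lies in a family of continuous functions
  that is closed under taking (everywhere existing) partial derivatives, i.e. all partial
  derivatives of all orders exist and are continuous.\<close>
definition smooth_fun :: "(real^'n \<Rightarrow> real) \<Rightarrow> bool" where
  "smooth_fun f \<longleftrightarrow> (\<exists>S. f \<in> S \<and>
     (\<forall>h\<in>S. continuous_on UNIV h \<and>
        (\<forall>i. \<exists>h'\<in>S. \<forall>x. ((\<lambda>t. h (x + t *\<^sub>R axis i 1)) has_field_derivative h' x) (at 0))))"

definition smooth_mat :: "(real^'n \<Rightarrow> real^'c^'r) \<Rightarrow> bool" where
  "smooth_mat A \<longleftrightarrow> (\<forall>i j. smooth_fun (\<lambda>x. A x $ i $ j))"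

definition xa_of :: "real^('m::finite+'s::finite) \<Rightarrow> real^'m" where
  "xa_of x = (\<chi> i. x $ Inl i)"
definition xu_of :: "real^('m::finite+'s::finite) \<Rightarrow> real^'s" where
  "xu_of x = (\<chi> j. x $ Inr j)"
definition col_au :: "real^'m \<Rightarrow> real^'s \<Rightarrow> real^('m::finite+'s::finite)" where
  "col_au a b = (\<chi> k. case k of Inl i \<Rightarrow> a $ i | Inr j \<Rightarrow> b $ j)"

definition blk_aa :: "real^('m::finite+'s::finite)^('m+'s) \<Rightarrow> real^'m^'m" where
  "blk_aa A = (\<chi> i j. A $ Inl i $ Inl j)"
definition blk_au :: "real^('m::finite+'s::finite)^('m+'s) \<Rightarrow> real^'s^'m" where
  "blk_au A = (\<chi> i j. A $ Inl i $ Inr j)"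

definition pos_def :: "real^'n^'n \<Rightarrow> bool" where
  "pos_def A \<longleftrightarrow> (\<forall>v. v \<noteq> 0 \<longrightarrow> v \<bullet> (A *v v) > 0)"
definition neg_def :: "real^'n^'n \<Rightarrow> bool" where
  "neg_def A \<longleftrightarrow> (\<forall>v. v \<noteq> 0 \<longrightarrow> v \<bullet> (A *v v) < 0)"
definition pos_semidef :: "real^'n^'n \<Rightarrow> bool" where
  "pos_semidef A \<longleftrightarrow> (\<forall>v. v \<bullet> (A *v v) \<ge> 0)"

definition plant_field ::
  "(real^('m::finite+'s::finite) \<Rightarrow> real^('m::finite+'s::finite)^('m+'s)) \<Rightarrow> (real^('m::finite+'s::finite) \<Rightarrow> real^('m::finite+'s::finite)^('m+'s)) \<Rightarrow>
   (real^('m::finite+'s::finite) \<Rightarrow> real^'m^'m) \<Rightarrow> real^'m \<Rightarrow> (real^('m::finite+'s::finite) \<Rightarrow> real^('m::finite+'s::finite)) \<Rightarrow>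
   real^('m::finite+'s::finite) \<Rightarrow> real^'m \<Rightarrow> real^('m::finite+'s::finite)" where
  "plant_field J R Gd dbar gradH x u =
     (J x - R x) *v gradH x + col_au (u - Gd x *v dbar) 0"

definition Jc1 :: "(real^('m::finite+'s::finite) \<Rightarrow> real^'m^'m) \<Rightarrow> real^('m::finite+'s::finite) \<Rightarrow> real^'m^'m" where
  "Jc1 Gd x = (1/2) *\<^sub>R (Gd x - transpose (Gd x))"
definition Rc1 :: "(real^('m::finite+'s::finite) \<Rightarrow> real^'m^'m) \<Rightarrow> real^('m::finite+'s::finite) \<Rightarrow> real^'m^'m" where
  "Rc1 Gd x = - ((1/2) *\<^sub>R (Gd x + transpose (Gd x)))"

definition control_u ::
  "(real^('m::finite+'s::finite) \<Rightarrow> real^('m::finite+'s::finite)^('m+'s)) \<Rightarrow> (real^('m::finite+'s::finite) \<Rightarrow> real^('m::finite+'s::finite)^('m+'s)) \<Rightarrow>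
   (real^('m::finite+'s::finite) \<Rightarrow> real^'m^'m) \<Rightarrow> real^'m^'m \<Rightarrow> real^'m^'m \<Rightarrow> (real^('m::finite+'s::finite) \<Rightarrow> real^('m::finite+'s::finite)) \<Rightarrow>
   real^('m::finite+'s::finite) \<Rightarrow> real^'m \<Rightarrow> real^'m" where
  "control_u J R Gd Ki Rc2 gradH x xc =
     (- blk_aa (J x) + blk_aa (R x) + Jc1 Gd x - Rc1 Gd x - Rc2) *v xa_of (gradH x)
     + (Jc1 Gd x - Rc1 Gd x) *v (Ki *v (xa_of x - xc))
     + 2 *\<^sub>R (blk_au (R x) *v xu_of (gradH x))"

definition controller_field ::
  "(real^('m::finite+'s::finite) \<Rightarrow> real^('m::finite+'s::finite)^('m+'s)) \<Rightarrow> (real^('m::finite+'s::finite) \<Rightarrow> real^('m::finite+'s::finite)^('m+'s)) \<Rightarrow>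
   real^'m^'m \<Rightarrow> (real^('m::finite+'s::finite) \<Rightarrow> real^('m::finite+'s::finite)) \<Rightarrow> real^('m::finite+'s::finite) \<Rightarrow> real^'m" where
  "controller_field J R Rc2 gradH x =
     - (Rc2 *v xa_of (gradH x)) + (blk_au (J x) + blk_au (R x)) *v xu_of (gradH x)"

text \<open>Closed loop in the coordinates w = (col(w_a, w_u), w_c) = (x, x_a - x_c);
  thus x_c = w_a - w_c and w_c_dot = x_a_dot - x_c_dot.\<close>
definition closed_loop ::
  "(real^('m::finite+'s::finite) \<Rightarrow> real^('m::finite+'s::finite)^('m+'s)) \<Rightarrow> (real^('m::finite+'s::finite) \<Rightarrow> real^('m::finite+'s::finite)^('m+'s)) \<Rightarrow>
   (real^('m::finite+'s::finite) \<Rightarrow> real^'m^'m) \<Rightarrow> real^'m \<Rightarrow> real^'m^'m \<Rightarrow> real^'m^'m \<Rightarrow>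
   (real^('m::finite+'s::finite) \<Rightarrow> real^('m::finite+'s::finite)) \<Rightarrow> (real^('m::finite+'s::finite)) \<times> (real^'m) \<Rightarrow> (real^('m::finite+'s::finite)) \<times> (real^'m)" where
  "closed_loop J R Gd dbar Ki Rc2 gradH w =
     (let x = fst w; xc = xa_of x - snd w;
          xdot = plant_field J R Gd dbar gradH x (control_u J R Gd Ki Rc2 gradH x xc)
      in (xdot, xa_of xdot - controller_field J R Rc2 gradH x))"

definition ode_sol_on :: "('a::real_normed_vector \<Rightarrow> 'a) \<Rightarrow> real \<Rightarrow> (real \<Rightarrow> 'a) \<Rightarrow> bool" where
  "ode_sol_on F T w \<longleftrightarrow>
     (\<forall>t\<in>{0..T}. (w has_vector_derivative F (w t)) (at t within {0..T}))"

definition ode_sol :: "('a::real_normed_vector \<Rightarrow> 'a) \<Rightarrow> (real \<Rightarrow> 'a) \<Rightarrow> bool" where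
  "ode_sol F w \<longleftrightarrow> (\<forall>t\<ge>0. (w has_vector_derivative F (w t)) (at t within {0..}))"

definition equilibrium :: "('a::real_normed_vector \<Rightarrow> 'a) \<Rightarrow> 'a \<Rightarrow> bool" where
  "equilibrium F e \<longleftrightarrow> F e = 0"

definition lyap_stable :: "('a::real_normed_vector \<Rightarrow> 'a) \<Rightarrow> 'a \<Rightarrow> bool" where
  "lyap_stable F e \<longleftrightarrow> (\<forall>\<epsilon>>0. \<exists>\<delta>>0. \<forall>T w. ode_sol_on F T w \<and> norm (w 0 - e) < \<delta> \<longrightarrow>
      (\<forall>t\<in>{0..T}. norm (w t - e) < \<epsilon>))"

definition asympt_stable :: "('a::real_normed_vector \<Rightarrow> 'a) \<Rightarrow> 'a \<Rightarrow> bool" where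
  "asympt_stable F e \<longleftrightarrow> lyap_stable F e \<and>
     (\<exists>\<delta>>0. \<forall>w. ode_sol F w \<and> norm (w 0 - e) < \<delta> \<longrightarrow> (w \<longlongrightarrow> e) at_top)"

definition glob_stable :: "('a::real_normed_vector \<Rightarrow> 'a) \<Rightarrow> 'a \<Rightarrow> bool" where
  "glob_stable F e \<longleftrightarrow> lyap_stable F e \<and>
     (\<forall>w0. \<exists>B. \<forall>T w. ode_sol_on F T w \<and> w 0 = w0 \<longrightarrow> (\<forall>t\<in>{0..T}. norm (w t) \<le> B))"

definition glob_asympt_stable :: "('a::real_normed_vector \<Rightarrow> 'a) \<Rightarrow> 'a \<Rightarrow> bool" where
  "glob_asympt_stable F e \<longleftrightarrow> lyap_stable F e \<and>
     (\<forall>w. ode_sol F w \<longrightarrow> (w \<longlongrightarrow> e) at_top)"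

definition detectable :: "('a::real_normed_vector \<Rightarrow> 'a) \<Rightarrow> ('a \<Rightarrow> 'b::zero) \<Rightarrow> 'a \<Rightarrow> bool" where
  "detectable F Y e \<longleftrightarrow>
     (\<forall>w. ode_sol F w \<and> (\<forall>t\<ge>0. Y (w t) = 0) \<longrightarrow> (w \<longlongrightarrow> e) at_top)"

definition radially_unbounded :: "('a::real_normed_vector \<Rightarrow> real) \<Rightarrow> bool" where
  "radially_unbounded H \<longleftrightarrow> filterlim H at_top at_infinity"

end

(*
  The shifted closed-loop energy
    H_cl(w) = H(w_a, w_u) + 1/2 (w_c - wbar_c)^T K_i (w_c - wbar_c)
  is a Lyapunov function. Since J_c1 - R_c1 = G_d, integral action and matched disturbance
  enter the actuated dynamics as G_d v with v = grad_a H + K_i (w_c - wbar_c), and w_c moves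
  with velocity G_d v as well, so the power balance reads
    d/dt H_cl = v^T G_d v - grad_a H^T R_c2 grad_a H - grad_u H^T R_uu grad_u H <= 0,
  which vanishes only where grad_a H = 0 and w_c = wbar_c. A strict local minimum of H at x*
  makes H_cl strictly minimal at wbar, hence wbar is stable. Along a bounded solution, limits of
  time-shifted copies (Arzela-Ascoli) are again solutions, on which H_cl is constant; so the
  output vanishes along them, detectability makes them converge to wbar, and stability drags the
  original solution along (LaSalle). Radial unboundedness of H bounds the sublevel sets of H_cl,
  which makes every solution bounded and the statements global.
*)

theory Submission
  imports Defs "HOL-Complex_Analysis.Great_Picard"
begin

section \<open>Lyapunov functions and LaSalle's invariance principle\<close>

lemma lyapunov_nonincreasing:
  fixes F :: "'a::real_normed_vector \<Rightarrow> 'a" and V :: "'a \<Rightarrow> real"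
  assumes V_deriv: "\<And>p. (V has_derivative DV p) (at p)"
    and V_decr: "\<And>p. DV p (F p) \<le> 0"
    and sol: "\<And>t. t \<in> {a..b} \<Longrightarrow> (w has_vector_derivative F (w t)) (at t within S)"
    and "{a..b} \<subseteq> S" and "a \<le> b"
  shows "V (w b) \<le> V (w a)"
proof -
  have deriv: "((\<lambda>t. V (w t)) has_derivative (\<lambda>h. DV (w t) (h *\<^sub>R F (w t)))) (at t within {a..b})"
    if "a \<le> t" "t \<le> b" for t
  proof -
    have "(w has_vector_derivative F (w t)) (at t within {a..b})"
      using sol[of t] that \<open>{a..b} \<subseteq> S\<close> by (auto intro: has_vector_derivative_within_subset)
    then show ?thesis
      unfolding has_vector_derivative_def by (rule has_derivative_compose[OF _ V_deriv])
  qed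
  from mvt_very_simple[OF \<open>a \<le> b\<close> deriv] obtain t where "t \<in> {a..b}"
    and mvt: "V (w b) - V (w a) = DV (w t) ((b - a) *\<^sub>R F (w t))" by auto
  interpret bounded_linear "DV (w t)" using V_deriv by (rule has_derivative_bounded_linear)
  have "DV (w t) ((b - a) *\<^sub>R F (w t)) = (b - a) * DV (w t) (F (w t))" by (simp add: scaleR)
  also have "\<dots> \<le> 0" using \<open>a \<le> b\<close> V_decr by (simp add: mult_nonneg_nonpos)
  finally show ?thesis using mvt by simp
qed

lemma lyapunov_sphere_barrier:
  fixes F :: "'a::real_normed_vector \<Rightarrow> 'a" and V :: "'a \<Rightarrow> real"
  assumes V_deriv: "\<And>p. (V has_derivative DV p) (at p)"
    and V_decr: "\<And>p. DV p (F p) \<le> 0"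
    and "ode_sol_on F T w" and "norm (w 0 - e) \<le> \<rho>"
    and barrier: "\<And>p. norm (p - e) = \<rho> \<Longrightarrow> V (w 0) < V p"
    and t: "t \<in> {0..T}"
  shows "norm (w t - e) < \<rho>"
proof (rule ccontr)
  assume "\<not> norm (w t - e) < \<rho>"
  have sol: "\<And>t. t \<in> {0..T} \<Longrightarrow> (w has_vector_derivative F (w t)) (at t within {0..T})"
    using \<open>ode_sol_on F T w\<close> by (simp add: ode_sol_on_def)
  then have "continuous_on {0..T} w"
    by (meson continuous_on_eq_continuous_within has_vector_derivative_continuous)
  then have "continuous_on {0..t} (\<lambda>\<tau>. norm (w \<tau> - e))"
    using t by (intro continuous_intros) (auto elim: continuous_on_subset)
  then obtain \<tau> where \<tau>: "\<tau> \<in> {0..t}" "norm (w \<tau> - e) = \<rho>"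
    using IVT'[of "\<lambda>\<tau>. norm (w \<tau> - e)" 0 \<rho> t] \<open>\<not> norm (w t - e) < \<rho>\<close> \<open>norm (w 0 - e) \<le> \<rho>\<close> t
    by auto
  have "V (w \<tau>) \<le> V (w 0)"
    by (rule lyapunov_nonincreasing[OF V_deriv V_decr sol]) (use \<tau> t in auto)
  with barrier[OF \<tau>(2)] show False by simp
qed

lemma lyap_stable_if_lyapunov:
  fixes F :: "'a::euclidean_space \<Rightarrow> 'a" and V :: "'a \<Rightarrow> real"
  assumes V_deriv: "\<And>p. (V has_derivative DV p) (at p)"
    and V_decr: "\<And>p. DV p (F p) \<le> 0"
    and strict_min: "\<exists>r>0. \<forall>p. 0 < norm (p - e) \<and> norm (p - e) < r \<longrightarrow> V e < V p"
  shows "lyap_stable F e"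
  unfolding lyap_stable_def
proof (intro allI impI)
  fix \<epsilon> :: real assume "\<epsilon> > 0"
  obtain r where "r > 0" and r: "\<And>p. 0 < norm (p - e) \<Longrightarrow> norm (p - e) < r \<Longrightarrow> V e < V p"
    using strict_min by blast
  define \<rho> where "\<rho> = min \<epsilon> (r/2)"
  have \<rho>: "0 < \<rho>" "\<rho> \<le> \<epsilon>" "\<rho> < r" using \<open>\<epsilon> > 0\<close> \<open>r > 0\<close> by (auto simp: \<rho>_def)
  have V_cont: "continuous_on UNIV V"
    using V_deriv by (meson continuous_on_eq_continuous_within has_derivative_continuous)
  have "sphere e \<rho> \<noteq> {}" using \<rho>(1) by simp
  then obtain q where q: "q \<in> sphere e \<rho>" and q_min: "\<And>p. p \<in> sphere e \<rho> \<Longrightarrow> V q \<le> V p"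
    using continuous_attains_inf[OF compact_sphere _ continuous_on_subset[OF V_cont]] by blast
  have "V e < V q" using r[of q] q \<rho> by (auto simp: dist_norm norm_minus_commute)
  then obtain d where "d > 0" and d: "\<And>p. dist p e < d \<Longrightarrow> dist (V p) (V e) < V q - V e"
    using V_cont unfolding continuous_on_eq_continuous_at[OF open_UNIV] continuous_at_eps_delta
    by (metis diff_gt_0_iff_gt UNIV_I)
  show "\<exists>\<delta>>0. \<forall>T w. ode_sol_on F T w \<and> norm (w 0 - e) < \<delta> \<longrightarrow> (\<forall>t\<in>{0..T}. norm (w t - e) < \<epsilon>)"
  proof (intro exI[of _ "min d \<rho>"] conjI allI impI ballI)
    show "min d \<rho> > 0" using \<open>d > 0\<close> \<rho> by simp
    fix T w t assume "ode_sol_on F T w \<and> norm (w 0 - e) < min d \<rho>" and "t \<in> {0..T}"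
    moreover have "V (w 0) < V p" if "norm (p - e) = \<rho>" for p
      using d[of "w 0"] q_min[of p] that \<open>ode_sol_on F T w \<and> norm (w 0 - e) < min d \<rho>\<close>
      by (auto simp: dist_norm norm_minus_commute)
    ultimately have "norm (w t - e) < \<rho>"
      by (intro lyapunov_sphere_barrier[OF V_deriv V_decr]) auto
    then show "norm (w t - e) < \<epsilon>" using \<rho> by simp
  qed
qed

lemma ode_sol_imp_ode_sol_on:
  assumes "ode_sol F w" shows "ode_sol_on F T w"
  unfolding ode_sol_on_def
proof
  fix t assume "t \<in> {0..T}"
  then have "(w has_vector_derivative F (w t)) (at t within {0..})"
    using assms by (simp add: ode_sol_def)
  then show "(w has_vector_derivative F (w t)) (at t within {0..T})"
    by (rule has_vector_derivative_within_subset) auto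
qed

lemma ode_sol_on_shift:
  assumes "ode_sol F w" and "c \<ge> 0"
  shows "ode_sol_on F T (\<lambda>\<tau>. w (c + \<tau>))"
  unfolding ode_sol_on_def
proof
  fix \<tau> assume "\<tau> \<in> {0..T}"
  then have "(w has_vector_derivative F (w (c + \<tau>))) (at (c + \<tau>) within {0..})"
    using assms by (simp add: ode_sol_def)
  then have "(w has_vector_derivative F (w (c + \<tau>))) (at (c + \<tau>) within (\<lambda>\<tau>. c + \<tau>) ` {0..T})"
    by (rule has_vector_derivative_within_subset) (use \<open>c \<ge> 0\<close> in auto)
  moreover have "((\<lambda>\<tau>. c + \<tau>) has_vector_derivative 1) (at \<tau> within {0..T})"
    by (auto intro!: derivative_eq_intros)
  ultimately show "((\<lambda>\<tau>. w (c + \<tau>)) has_vector_derivative F (w (c + \<tau>))) (at \<tau> within {0..T})"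
    using vector_diff_chain_within by (fastforce simp: o_def)
qed

lemma ode_sol_lipschitz:
  fixes F :: "'a::real_normed_vector \<Rightarrow> 'a"
  assumes sol: "ode_sol F w" and bound: "\<And>t. t \<ge> 0 \<Longrightarrow> norm (F (w t)) \<le> M"
    and "a \<ge> 0" "b \<ge> 0"
  shows "norm (w a - w b) \<le> M * \<bar>a - b\<bar>"
proof -
  have "norm (w a - w b) \<le> M * norm (a - b)"
  proof (rule differentiable_bound[of "{0..}" w "\<lambda>t h. h *\<^sub>R F (w t)"])
    show "(w has_derivative (\<lambda>h. h *\<^sub>R F (w t))) (at t within {0..})" if "t \<in> {0..}" for t
      using sol that by (simp add: ode_sol_def has_vector_derivative_def)
    show "onorm (\<lambda>h. h *\<^sub>R F (w t)) \<le> M" if "t \<in> {0..}" for t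
      using bound[of t] that by (intro onorm_le) (auto simp: mult.commute[of M] mult_left_mono)
  qed (use assms in \<open>auto simp: convex_real_interval\<close>)
  then show ?thesis by simp
qed

lemma ode_sol_uniform_linearization:
  fixes F :: "'a::euclidean_space \<Rightarrow> 'a"
  assumes F_cont: "continuous_on UNIV F" and "compact K"
    and sol: "ode_sol F w" and in_K: "\<And>t. t \<ge> 0 \<Longrightarrow> w t \<in> K" and "\<epsilon> > 0"
  shows "\<exists>\<delta>>0. \<forall>a b. a \<ge> 0 \<longrightarrow> b \<ge> 0 \<longrightarrow> \<bar>b - a\<bar> < \<delta> \<longrightarrow>
           norm (w b - w a - (b - a) *\<^sub>R F (w a)) \<le> \<epsilon> * \<bar>b - a\<bar>"
proof -
  obtain M where "M > 0" and M: "\<And>p. p \<in> K \<Longrightarrow> norm (F p) \<le> M"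
    using compact_imp_bounded[OF compact_continuous_image[OF continuous_on_subset[OF F_cont] \<open>compact K\<close>]]
    unfolding bounded_pos by auto
  have "uniformly_continuous_on K F"
    using \<open>compact K\<close> F_cont by (auto intro: compact_uniformly_continuous continuous_on_subset)
  then obtain d where "d > 0" and d: "\<And>p q. p \<in> K \<Longrightarrow> q \<in> K \<Longrightarrow> dist q p < d \<Longrightarrow> dist (F q) (F p) < \<epsilon>"
    using \<open>\<epsilon> > 0\<close> unfolding uniformly_continuous_on_def by metis
  show ?thesis
  proof (intro exI[of _ "d / M"] conjI allI impI)
    show "d / M > 0" using \<open>d > 0\<close> \<open>M > 0\<close> by simp
    fix a b :: real assume ab: "a \<ge> 0" "b \<ge> 0" "\<bar>b - a\<bar> < d / M"
    have seg: "closed_segment a b \<subseteq> {0..}"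
      using ab by (auto simp: closed_segment_eq_real_ivl split: if_splits)
    have "norm (w b - w a - (b - a) *\<^sub>R F (w a)) \<le> norm (b - a) * \<epsilon>"
    proof (rule vector_differentiable_bound_linearization[of "closed_segment a b" w "\<lambda>t. F (w t)"])
      show "(w has_vector_derivative F (w t)) (at t within closed_segment a b)"
        if "t \<in> closed_segment a b" for t
        using sol seg that unfolding ode_sol_def by (auto intro: has_vector_derivative_within_subset)
      show "norm (F (w t) - F (w a)) \<le> \<epsilon>" if t: "t \<in> closed_segment a b" for t
      proof -
        have "t \<ge> 0" "\<bar>t - a\<bar> \<le> \<bar>b - a\<bar>"
          using t seg by (auto simp: closed_segment_eq_real_ivl split: if_splits)
        then have "norm (w t - w a) \<le> M * \<bar>b - a\<bar>"
          using ode_sol_lipschitz[OF sol, of M t a] M in_K ab \<open>M > 0\<close>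
          by (meson mult_left_mono less_imp_le order_trans)
        also have "\<dots> < d" using ab(3) \<open>M > 0\<close> by (simp add: field_simps)
        finally show ?thesis using d[of "w a" "w t"] in_K \<open>t \<ge> 0\<close> ab by (simp add: dist_norm)
      qed
    qed auto
    then show "norm (w b - w a - (b - a) *\<^sub>R F (w a)) \<le> \<epsilon> * \<bar>b - a\<bar>" by (simp add: mult.commute)
  qed
qed

lemma convergent_if_eventually_later_terms:
  fixes X Y :: "nat \<Rightarrow> 'a::metric_space"
  assumes "convergent X" and later: "\<And>j. N \<le> j \<Longrightarrow> \<exists>j'. j \<le> j' \<and> Y j = X j'"
  shows "convergent Y"
proof -
  obtain l where l: "X \<longlonglongrightarrow> l" using \<open>convergent X\<close> by (auto simp: convergent_def)
  have "Y \<longlonglongrightarrow> l"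
  proof (rule metric_LIMSEQ_I)
    fix \<epsilon> :: real assume "\<epsilon> > 0"
    then obtain N0 where N0: "\<And>n. n \<ge> N0 \<Longrightarrow> dist (X n) l < \<epsilon>"
      using metric_LIMSEQ_D[OF l] by blast
    show "\<exists>N'. \<forall>j\<ge>N'. dist (Y j) l < \<epsilon>"
      using later N0 by (metis max.bounded_iff order.trans)
  qed
  then show ?thesis by (auto simp: convergent_def)
qed

lemma lipschitz_shifts_convergent_subseq_on_interval:
  fixes w :: "real \<Rightarrow> 'a::euclidean_space"
  assumes bounded: "\<And>t. t \<ge> 0 \<Longrightarrow> norm (w t) \<le> B"
    and lipschitz: "\<And>a b. a \<ge> 0 \<Longrightarrow> b \<ge> 0 \<Longrightarrow> norm (w a - w b) \<le> M * \<bar>a - b\<bar>" and "M > 0"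
  shows "\<exists>k. strict_mono (k :: nat \<Rightarrow> nat) \<and> (\<forall>s\<in>{0..T}. convergent (\<lambda>n. w (real (r (k n)) + s)))"
proof -
  obtain g and k :: "nat \<Rightarrow> nat" where "strict_mono k"
    and g: "\<And>\<epsilon>. \<epsilon> > 0 \<Longrightarrow> \<exists>N. \<forall>n s. n \<ge> N \<and> s \<in> {0..T} \<longrightarrow> norm (w (real (r (k n)) + s) - g s) < \<epsilon>"
  proof (rule Arzela_Ascoli[of "{0..T}" "\<lambda>n s. w (real (r n) + s)" B])
    show "norm (w (real (r n) + s)) \<le> B" if "s \<in> {0..T}" for n s
      using bounded that by simp
    show "\<exists>d>0. \<forall>n s'. s' \<in> {0..T} \<and> norm (s - s') < d \<longrightarrow> norm (w (real (r n) + s) - w (real (r n) + s')) < \<epsilon>"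
      if "s \<in> {0..T}" "\<epsilon> > 0" for s \<epsilon>
    proof (intro exI[of _ "\<epsilon> / M"] conjI allI impI)
      fix n s' assume s': "s' \<in> {0..T} \<and> norm (s - s') < \<epsilon> / M"
      have "norm (w (real (r n) + s) - w (real (r n) + s')) \<le> M * \<bar>s - s'\<bar>"
        using lipschitz[of "real (r n) + s" "real (r n) + s'"] that s' by auto
      also have "\<dots> < \<epsilon>" using s' \<open>M > 0\<close> by (simp add: field_simps)
      finally show "norm (w (real (r n) + s) - w (real (r n) + s')) < \<epsilon>" .
    qed (use that \<open>M > 0\<close> in simp)
  qed (blast | simp)+
  have "(\<lambda>n. w (real (r (k n)) + s)) \<longlonglongrightarrow> g s" if "s \<in> {0..T}" for s
    using g that by (intro LIMSEQ_I) blast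
  then show ?thesis using \<open>strict_mono k\<close> unfolding convergent_def by blast
qed

lemma lipschitz_shifts_convergent_subseq:
  fixes w :: "real \<Rightarrow> 'a::euclidean_space"
  assumes bounded: "\<And>t. t \<ge> 0 \<Longrightarrow> norm (w t) \<le> B"
    and lipschitz: "\<And>a b. a \<ge> 0 \<Longrightarrow> b \<ge> 0 \<Longrightarrow> norm (w a - w b) \<le> M * \<bar>a - b\<bar>" and "M > 0"
  obtains k y where "strict_mono (k :: nat \<Rightarrow> nat)" "\<And>s. s \<ge> 0 \<Longrightarrow> (\<lambda>n. w (real (k n) + s)) \<longlonglongrightarrow> y s"
proof -
  define P where "P i r \<longleftrightarrow> (\<forall>s\<in>{0..real i}. convergent (\<lambda>n. w (real (r n) + s)))" for i r
  obtain k where "strict_mono (k :: nat \<Rightarrow> nat)" and k: "\<And>i. P i (id \<circ> k)"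
  proof (rule subsequence_diagonalization_lemma[of P id])
    show "\<exists>k. strict_mono (k :: nat \<Rightarrow> nat) \<and> P i (r \<circ> k)" for i r
      using lipschitz_shifts_convergent_subseq_on_interval[OF bounded lipschitz \<open>M > 0\<close>]
      by (simp add: P_def)
    show "P i (r \<circ> k2)"
      if k1: "P i (r \<circ> k1)" and later: "\<And>j. N \<le> j \<Longrightarrow> \<exists>j'. j \<le> j' \<and> k2 j = k1 j'" for i r k1 k2 N
      unfolding P_def
    proof
      fix s assume "s \<in> {0..real i}"
      then have "convergent (\<lambda>n. w (real (r (k1 n)) + s))" using k1 by (simp add: P_def)
      then show "convergent (\<lambda>n. w (real ((r \<circ> k2) n) + s))"
      proof (rule convergent_if_eventually_later_terms)
        fix j assume "N \<le> j"
        with later obtain j' where "j \<le> j'" "k2 j = k1 j'" by blast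
        then show "\<exists>j'. j \<le> j' \<and> w (real ((r \<circ> k2) j) + s) = w (real (r (k1 j')) + s)" by auto
      qed
    qed
  qed blast
  have "(\<lambda>n. w (real (k n) + s)) \<longlonglongrightarrow> lim (\<lambda>n. w (real (k n) + s))" if "s \<ge> 0" for s
    using k[of "nat \<lceil>s\<rceil>"] that by (simp add: P_def real_nat_ceiling_ge convergent_LIMSEQ_iff)
  then show ?thesis by (rule that[OF \<open>strict_mono k\<close>])
qed

lemma limit_of_shifted_solutions_is_solution:
  fixes F :: "'a::euclidean_space \<Rightarrow> 'a"
  assumes F_cont: "continuous_on UNIV F" and "compact K"
    and sol: "ode_sol F w" and in_K: "\<And>t. t \<ge> 0 \<Longrightarrow> w t \<in> K"
    and shifts: "\<And>n. c n \<ge> 0" and lim: "\<And>s. s \<ge> 0 \<Longrightarrow> (\<lambda>n. w (c n + s)) \<longlonglongrightarrow> y s"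
  shows "ode_sol F y"
  unfolding ode_sol_def has_vector_derivative_def has_derivative_within_alt
proof (intro allI impI conjI)
  fix s :: real and \<epsilon> :: real assume "s \<ge> 0" "\<epsilon> > 0"
  then obtain \<delta> where "\<delta> > 0" and \<delta>: "\<And>a b. a \<ge> 0 \<Longrightarrow> b \<ge> 0 \<Longrightarrow> \<bar>b - a\<bar> < \<delta> \<Longrightarrow>
      norm (w b - w a - (b - a) *\<^sub>R F (w a)) \<le> \<epsilon> * \<bar>b - a\<bar>"
    using ode_sol_uniform_linearization[OF F_cont \<open>compact K\<close> sol in_K] by metis
  show "\<exists>d>0. \<forall>t\<in>{0..}. norm (t - s) < d \<longrightarrow> norm (y t - y s - (t - s) *\<^sub>R F (y s)) \<le> \<epsilon> * norm (t - s)"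
  proof (intro exI[of _ \<delta>] conjI ballI impI)
    fix t :: real assume t: "t \<in> {0..}" "norm (t - s) < \<delta>"
    have "isCont F (y s)" using F_cont by (simp add: continuous_on_eq_continuous_at)
    then have "(\<lambda>n. F (w (c n + s))) \<longlonglongrightarrow> F (y s)"
      using lim[OF \<open>s \<ge> 0\<close>] by (rule isCont_tendsto_compose)
    then have "(\<lambda>n. norm (w (c n + t) - w (c n + s) - (t - s) *\<^sub>R F (w (c n + s))))
        \<longlonglongrightarrow> norm (y t - y s - (t - s) *\<^sub>R F (y s))"
      using lim t \<open>s \<ge> 0\<close> by (intro tendsto_intros) auto
    moreover have "norm (w (c n + t) - w (c n + s) - (t - s) *\<^sub>R F (w (c n + s))) \<le> \<epsilon> * norm (t - s)" for n
      using \<delta>[of "c n + s" "c n + t"] shifts[of n] t \<open>s \<ge> 0\<close> by simp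
    ultimately show "norm (y t - y s - (t - s) *\<^sub>R F (y s)) \<le> \<epsilon> * norm (t - s)"
      by (intro LIMSEQ_le_const2) auto
  qed (rule \<open>\<delta> > 0\<close>)
qed (rule bounded_linear_scaleR_left)

lemma lyapunov_tendsto_Inf:
  fixes F :: "'a::real_normed_vector \<Rightarrow> 'a" and V :: "'a \<Rightarrow> real"
  assumes V_deriv: "\<And>p. (V has_derivative DV p) (at p)" and V_decr: "\<And>p. DV p (F p) \<le> 0"
    and sol: "ode_sol F w" and bdd: "bdd_below ((\<lambda>t. V (w t)) ` {0..})"
  shows "((\<lambda>t. V (w t)) \<longlongrightarrow> Inf ((\<lambda>t. V (w t)) ` {0..})) at_top"
proof (rule order_tendstoI)
  let ?L = "Inf ((\<lambda>t. V (w t)) ` {0..})"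
  fix a assume "a < ?L"
  have "?L \<le> V (w t)" if "t \<ge> 0" for t using bdd that by (auto intro: cInf_lower)
  with \<open>a < ?L\<close> show "eventually (\<lambda>t. a < V (w t)) at_top"
    unfolding eventually_at_top_linorder by (auto intro: less_le_trans)
next
  let ?L = "Inf ((\<lambda>t. V (w t)) ` {0..})"
  fix a assume "?L < a"
  then obtain t0 where "t0 \<ge> 0" "V (w t0) < a"
    using bdd by (subst (asm) cInf_less_iff) auto
  moreover have "V (w t) \<le> V (w t0)" if "t \<ge> t0" for t
    using sol that \<open>t0 \<ge> 0\<close> unfolding ode_sol_def
    by (intro lyapunov_nonincreasing[OF V_deriv V_decr, of t0 t _ "{0..}"]) auto
  ultimately show "eventually (\<lambda>t. V (w t) < a) at_top"
    unfolding eventually_at_top_linorder by (auto intro: le_less_trans)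
qed

lemma lyapunov_derivative_vanishes_if_constant:
  fixes F :: "'a::real_normed_vector \<Rightarrow> 'a" and V :: "'a \<Rightarrow> real"
  assumes V_deriv: "\<And>p. (V has_derivative DV p) (at p)"
    and sol: "ode_sol F y" and const: "\<And>t. t \<ge> 0 \<Longrightarrow> V (y t) = L" and "s \<ge> 0"
  shows "DV (y s) (F (y s)) = 0"
proof -
  interpret bounded_linear "DV (y s)" using V_deriv by (rule has_derivative_bounded_linear)
  have "((\<lambda>t. V (y t)) has_derivative (\<lambda>h. DV (y s) (h *\<^sub>R F (y s)))) (at s within {0..})"
    using sol \<open>s \<ge> 0\<close> unfolding ode_sol_def has_vector_derivative_def
    by (intro has_derivative_compose[OF _ V_deriv]) auto
  then have "((\<lambda>t. V (y t)) has_vector_derivative DV (y s) (F (y s))) (at s within {0..})"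
    by (simp add: has_vector_derivative_def scaleR)
  moreover have "((\<lambda>t. V (y t)) has_vector_derivative 0) (at s within {0..})"
    using const \<open>s \<ge> 0\<close>
    by (intro has_vector_derivative_transform_within[OF has_vector_derivative_const[of L] zero_less_one]) auto
  moreover have "at s within {0..} \<noteq> bot"
  proof
    assume "at s within {0..} = bot"
    moreover have "at_right s \<le> at s within {0..}" using \<open>s \<ge> 0\<close> by (intro at_le) auto
    ultimately show False using trivial_limit_at_right_real[of s] by (simp add: bot_unique)
  qed
  ultimately show ?thesis by (rule vector_derivative_unique_within[rotated])
qed

lemma tendsto_stable_equilibrium_if_approached:
  assumes stable: "lyap_stable F e" and sol: "ode_sol F w"
    and approach: "\<And>\<delta>. \<delta> > 0 \<Longrightarrow> \<exists>c\<ge>0. norm (w c - e) < \<delta>"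
  shows "(w \<longlongrightarrow> e) at_top"
proof (rule tendstoI)
  fix \<epsilon> :: real assume "\<epsilon> > 0"
  then obtain \<delta> where "\<delta> > 0"
    and \<delta>: "\<And>T w. ode_sol_on F T w \<Longrightarrow> norm (w 0 - e) < \<delta> \<Longrightarrow> \<forall>t\<in>{0..T}. norm (w t - e) < \<epsilon>"
    using stable unfolding lyap_stable_def by metis
  obtain c where "c \<ge> 0" and "norm (w c - e) < \<delta>" using approach[OF \<open>\<delta> > 0\<close>] by blast
  have "norm (w (c + (t - c)) - e) < \<epsilon>" if "t \<ge> c" for t
  proof -
    have "\<forall>\<tau>\<in>{0..t - c}. norm (w (c + \<tau>) - e) < \<epsilon>"
      using \<delta>[OF ode_sol_on_shift[OF sol \<open>c \<ge> 0\<close>]] \<open>norm (w c - e) < \<delta>\<close> by simp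
    from bspec[OF this, of "t - c"] show ?thesis using that by simp
  qed
  then show "eventually (\<lambda>t. dist (w t) e < \<epsilon>) at_top"
    unfolding eventually_at_top_linorder by (auto simp: dist_norm)
qed

lemma shifted_solutions_converge_to_solution:
  fixes F :: "'a::euclidean_space \<Rightarrow> 'a"
  assumes F_cont: "continuous_on UNIV F" and "compact K"
    and sol: "ode_sol F w" and in_K: "\<And>t. t \<ge> 0 \<Longrightarrow> w t \<in> K"
  obtains k y where "strict_mono (k :: nat \<Rightarrow> nat)" "ode_sol F y"
    "\<And>s. s \<ge> 0 \<Longrightarrow> (\<lambda>n. w (real (k n) + s)) \<longlonglongrightarrow> y s"
proof -
  obtain M where "M > 0" and M: "\<And>p. p \<in> K \<Longrightarrow> norm (F p) \<le> M"
    using compact_imp_bounded[OF compact_continuous_image[OF continuous_on_subset[OF F_cont] \<open>compact K\<close>]]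
    unfolding bounded_pos by auto
  obtain B where B: "\<And>p. p \<in> K \<Longrightarrow> norm p \<le> B"
    using compact_imp_bounded[OF \<open>compact K\<close>] unfolding bounded_pos by auto
  have bounded: "norm (w t) \<le> B" if "t \<ge> 0" for t
    using B in_K that by blast
  have lipschitz: "norm (w a - w b) \<le> M * \<bar>a - b\<bar>" if "a \<ge> 0" "b \<ge> 0" for a b
    using ode_sol_lipschitz[OF sol _ that] M in_K by blast
  obtain k y where "strict_mono k" and y: "\<And>s. s \<ge> 0 \<Longrightarrow> (\<lambda>n. w (real (k n) + s)) \<longlonglongrightarrow> y s"
    using lipschitz_shifts_convergent_subseq[OF bounded lipschitz \<open>M > 0\<close>] by blast
  moreover have "ode_sol F y"
    by (rule limit_of_shifted_solutions_is_solution[OF F_cont \<open>compact K\<close> sol in_K, of "\<lambda>n. real (k n)"])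
      (use y in auto)
  ultimately show ?thesis using that by blast
qed

lemma lasalle_convergence:
  fixes F :: "'a::euclidean_space \<Rightarrow> 'a" and V :: "'a \<Rightarrow> real"
  assumes F_cont: "continuous_on UNIV F"
    and V_deriv: "\<And>p. (V has_derivative DV p) (at p)" and V_decr: "\<And>p. DV p (F p) \<le> 0"
    and stable: "lyap_stable F e"
    and invariance: "\<And>y. ode_sol F y \<Longrightarrow> (\<And>t. t \<ge> 0 \<Longrightarrow> DV (y t) (F (y t)) = 0) \<Longrightarrow> (y \<longlongrightarrow> e) at_top"
    and sol: "ode_sol F w" and "compact K" and in_K: "\<And>t. t \<ge> 0 \<Longrightarrow> w t \<in> K"
  shows "(w \<longlongrightarrow> e) at_top"
proof -
  obtain k y where "strict_mono k" "ode_sol F y"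
    and y: "\<And>s. s \<ge> 0 \<Longrightarrow> (\<lambda>n. w (real (k n) + s)) \<longlonglongrightarrow> y s"
    using shifted_solutions_converge_to_solution[OF F_cont \<open>compact K\<close> sol in_K] by blast
  have V_cont: "continuous_on UNIV V"
    using V_deriv by (meson continuous_on_eq_continuous_within has_derivative_continuous)
  have "bdd_below (V ` K)"
    using compact_continuous_image[OF continuous_on_subset[OF V_cont] \<open>compact K\<close>]
    by (auto intro: bounded_imp_bdd_below compact_imp_bounded)
  then have "bdd_below ((\<lambda>t. V (w t)) ` {0..})"
    by (rule bdd_below_mono) (use in_K in auto)
  from lyapunov_tendsto_Inf[OF V_deriv V_decr sol this]
  obtain L where V_lim: "((\<lambda>t. V (w t)) \<longlongrightarrow> L) at_top" by blast
  have "V (y s) = L" if "s \<ge> 0" for s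
  proof (rule LIMSEQ_unique)
    show "(\<lambda>n. V (w (real (k n) + s))) \<longlonglongrightarrow> V (y s)"
      using V_cont y[OF that] by (metis continuous_on_eq_continuous_at isCont_tendsto_compose open_UNIV UNIV_I)
    have "filterlim (\<lambda>n. real (k n)) at_top sequentially"
      using filterlim_compose[OF filterlim_real_sequentially filterlim_subseq[OF \<open>strict_mono k\<close>]]
      by (simp add: o_def)
    then have "filterlim (\<lambda>n. real (k n) + s) at_top sequentially"
      using filterlim_tendsto_add_at_top[OF tendsto_const] by (simp add: add.commute)
    from filterlim_compose[OF V_lim this]
    show "(\<lambda>n. V (w (real (k n) + s))) \<longlonglongrightarrow> L" by (simp add: o_def)
  qed
  then have y_e: "(y \<longlongrightarrow> e) at_top"
    using invariance[OF \<open>ode_sol F y\<close>] lyapunov_derivative_vanishes_if_constant[OF V_deriv \<open>ode_sol F y\<close>]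
    by blast
  show ?thesis
  proof (rule tendsto_stable_equilibrium_if_approached[OF stable sol])
    fix \<delta> :: real assume "\<delta> > 0"
    then have "eventually (\<lambda>s. dist (y s) e < \<delta>/2 \<and> s \<ge> 0) at_top"
      using tendstoD[OF y_e, of "\<delta>/2"] eventually_ge_at_top by (auto intro: eventually_conj)
    then obtain s where "dist (y s) e < \<delta>/2" "s \<ge> 0" by (auto simp: eventually_at_top_linorder)
    moreover obtain n where "dist (w (real (k n) + s)) (y s) < \<delta>/2"
      using tendstoD[OF y[OF \<open>s \<ge> 0\<close>], of "\<delta>/2"] \<open>\<delta> > 0\<close> by (auto simp: eventually_sequentially)
    ultimately show "\<exists>c\<ge>0. norm (w c - e) < \<delta>"
      using dist_triangle_half_l[of "w (real (k n) + s)" "y s" \<delta> e]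
      by (intro exI[of _ "real (k n) + s"]) (auto simp: dist_norm norm_minus_commute)
  qed
qed

section \<open>Smoothness and continuity\<close>

lemma continuous_on_if_smooth_fun: "smooth_fun f \<Longrightarrow> continuous_on UNIV f"
  unfolding smooth_fun_def by blast

lemma continuous_on_if_smooth_mat:
  assumes "smooth_mat A" shows "continuous_on UNIV A"
proof -
  have "continuous_on UNIV (\<lambda>x. \<chi> i j. A x $ i $ j)"
    using assms unfolding smooth_mat_def by (intro continuous_on_vec_lambda) (simp add: continuous_on_if_smooth_fun)
  then show ?thesis by simp
qed

lemma continuous_on_gradient_if_smooth:
  fixes H :: "real^'n \<Rightarrow> real"
  assumes "smooth_fun H" and H_grad: "\<And>x. (H has_derivative (\<lambda>h. gradH x \<bullet> h)) (at x)"
  shows "continuous_on UNIV gradH"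
proof -
  obtain S where "H \<in> S" and S: "\<And>h i. h \<in> S \<Longrightarrow>
      \<exists>h'\<in>S. \<forall>x. ((\<lambda>t. h (x + t *\<^sub>R axis i 1)) has_field_derivative h' x) (at 0)"
    and S_cont: "\<And>h. h \<in> S \<Longrightarrow> continuous_on UNIV h"
    using \<open>smooth_fun H\<close> unfolding smooth_fun_def by blast
  have "continuous_on UNIV (\<lambda>x. gradH x $ i)" for i
  proof -
    obtain h' where "h' \<in> S" and h': "\<And>x. ((\<lambda>t. H (x + t *\<^sub>R axis i 1)) has_field_derivative h' x) (at 0)"
      using S[OF \<open>H \<in> S\<close>, of i] by blast
    have "((\<lambda>t. H (x + t *\<^sub>R axis i 1)) has_field_derivative gradH x $ i) (at 0)" for x
    proof -
      have "((\<lambda>t. x + t *\<^sub>R axis i 1) has_derivative (\<lambda>t. t *\<^sub>R axis i 1)) (at 0)"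
        by (auto intro!: derivative_eq_intros)
      moreover have "(H has_derivative (\<lambda>h. gradH x \<bullet> h)) (at ((\<lambda>t. x + t *\<^sub>R axis i (1::real)) 0))"
        using H_grad by simp
      ultimately have "((\<lambda>t. H (x + t *\<^sub>R axis i 1)) has_derivative (\<lambda>t. gradH x \<bullet> (t *\<^sub>R axis i 1))) (at 0)"
        by (rule has_derivative_compose)
      moreover have "(\<lambda>t. gradH x \<bullet> (t *\<^sub>R axis i 1)) = (\<lambda>t. gradH x $ i * t)"
        by (auto simp: fun_eq_iff inner_axis)
      ultimately show ?thesis by (simp add: has_field_derivative_def)
    qed
    then have "(\<lambda>x. gradH x $ i) = h'" using h' DERIV_unique by blast
    then show ?thesis using S_cont \<open>h' \<in> S\<close> by simp
  qed
  then have "continuous_on UNIV (\<lambda>x. \<chi> i. gradH x $ i)" by (intro continuous_on_vec_lambda)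
  then show ?thesis by simp
qed

lemma continuous_on_matrix_vector_mult [continuous_intros]:
  fixes A :: "'a::topological_space \<Rightarrow> real^'n^'m"
  assumes "continuous_on S A" "continuous_on S v"
  shows "continuous_on S (\<lambda>x. A x *v v x)"
  unfolding matrix_vector_mult_def by (intro continuous_intros assms)

lemma continuous_on_transpose [continuous_intros]:
  fixes A :: "'a::topological_space \<Rightarrow> real^'n^'m"
  assumes "continuous_on S A"
  shows "continuous_on S (\<lambda>x. transpose (A x))"
  unfolding transpose_def by (intro continuous_intros assms)

lemma continuous_on_xa_of [continuous_intros]:
  "continuous_on S f \<Longrightarrow> continuous_on S (\<lambda>x. xa_of (f x))"
  unfolding xa_of_def by (intro continuous_intros)

lemma continuous_on_xu_of [continuous_intros]:
  "continuous_on S f \<Longrightarrow> continuous_on S (\<lambda>x. xu_of (f x))"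
  unfolding xu_of_def by (intro continuous_intros)

lemma continuous_on_blk_aa [continuous_intros]:
  "continuous_on S f \<Longrightarrow> continuous_on S (\<lambda>x. blk_aa (f x))"
  unfolding blk_aa_def by (intro continuous_intros)

lemma continuous_on_blk_au [continuous_intros]:
  "continuous_on S f \<Longrightarrow> continuous_on S (\<lambda>x. blk_au (f x))"
  unfolding blk_au_def by (intro continuous_intros)

lemma continuous_on_col_au [continuous_intros]:
  assumes "continuous_on S a" "continuous_on S b"
  shows "continuous_on S (\<lambda>x. col_au (a x) (b x))"
  unfolding col_au_def
proof (intro continuous_on_vec_lambda)
  show "continuous_on S (\<lambda>x. case k of Inl i \<Rightarrow> a x $ i | Inr j \<Rightarrow> b x $ j)" for k
    by (cases k) (auto intro!: continuous_intros assms)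
qed

section \<open>Quadratic forms\<close>

lemma uminus_matrix_vector_mult: "(- A) *v v = - (A *v (v::real^'n))"
  by (simp add: vec_eq_iff matrix_vector_mult_def sum_negf)

lemma inner_matrix_vector_mult_transpose: "(u::real^'n) \<bullet> (A *v v) = v \<bullet> (transpose A *v u)"
  by (metis dot_lmul_matrix inner_commute transpose_transpose vector_transpose_matrix)

lemma skew_quadratic_form_zero: "transpose (A::real^'n^'n) = - A \<Longrightarrow> v \<bullet> (A *v v) = 0"
  using inner_matrix_vector_mult_transpose[of v A v] by (simp add: uminus_matrix_vector_mult)

lemma symmetric_inner_swap: "transpose (A::real^'n^'n) = A \<Longrightarrow> u \<bullet> (A *v v) = v \<bullet> (A *v u)"
  using inner_matrix_vector_mult_transpose[of u A v] by simp

lemma pos_def_quadratic_form_nonneg: "pos_def A \<Longrightarrow> 0 \<le> v \<bullet> (A *v v)"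
  unfolding pos_def_def by (cases "v = 0") (auto intro: less_imp_le)

lemma pos_def_quadratic_form_eq_0_iff: "pos_def A \<Longrightarrow> v \<bullet> (A *v v) = 0 \<longleftrightarrow> v = 0"
  unfolding pos_def_def by (metis inner_zero_left less_irrefl)

lemma neg_def_quadratic_form_nonpos: "neg_def A \<Longrightarrow> v \<bullet> (A *v v) \<le> 0"
  unfolding neg_def_def by (cases "v = 0") (auto intro: less_imp_le)

lemma neg_def_quadratic_form_eq_0_iff: "neg_def A \<Longrightarrow> v \<bullet> (A *v v) = 0 \<longleftrightarrow> v = 0"
  unfolding neg_def_def by (metis inner_zero_left less_irrefl)

lemma pos_def_matrix_inv_right:
  assumes "pos_def (A :: real^'n^'n)"
  shows "A *v (matrix_inv A *v v) = v"
proof -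
  have "A *v x = 0 \<Longrightarrow> x = 0" for x
    using pos_def_quadratic_form_eq_0_iff[OF assms, of x] by simp
  then have "invertible A"
    by (simp add: invertible_left_inverse matrix_left_invertible_ker)
  then have "A ** matrix_inv A = mat 1"
    unfolding invertible_def matrix_inv_def by (rule someI2_ex) blast
  then show ?thesis by (simp add: matrix_vector_mul_assoc)
qed

lemma pos_def_quadratic_lower_bound:
  assumes "pos_def (A :: real^'n^'n)"
  obtains l where "l > 0" "\<And>v. l * (norm v)\<^sup>2 \<le> v \<bullet> (A *v v)"
proof -
  have "sphere (0::real^'n) 1 \<noteq> {}" by simp
  moreover have "continuous_on (sphere 0 1) (\<lambda>v::real^'n. v \<bullet> (A *v v))" by (intro continuous_intros)
  ultimately obtain u where "u \<in> sphere 0 1" and u: "\<And>v. v \<in> sphere 0 1 \<Longrightarrow> u \<bullet> (A *v u) \<le> v \<bullet> (A *v v)"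
    using continuous_attains_inf[OF compact_sphere] by blast
  then have "u \<bullet> (A *v u) > 0" using assms unfolding pos_def_def by (metis norm_zero mem_sphere_0 zero_neq_one)
  moreover have "u \<bullet> (A *v u) * (norm v)\<^sup>2 \<le> v \<bullet> (A *v v)" for v
  proof (cases "v = 0")
    case False
    then have "u \<bullet> (A *v u) \<le> (v /\<^sub>R norm v) \<bullet> (A *v (v /\<^sub>R norm v))" by (intro u) simp
    also have "\<dots> = (v \<bullet> (A *v v)) / (norm v)\<^sup>2"
      by (simp add: matrix_vector_mult_scaleR power2_eq_square divide_inverse)
    finally show ?thesis using False by (simp add: pos_le_divide_eq)
  qed simp
  ultimately show ?thesis using that by blast
qed

section \<open>Splitting the state into actuated and unactuated parts\<close>

lemma sum_UNIV_Plus: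
  "(\<Sum>k\<in>(UNIV::('a::finite + 'b::finite) set). f k) = (\<Sum>i\<in>UNIV. f (Inl i)) + (\<Sum>j\<in>UNIV. f (Inr j))"
  by (subst UNIV_Plus_UNIV[symmetric], subst sum.Plus) (auto simp: o_def)

lemma inner_split_au: "(g::real^('m::finite+'s::finite)) \<bullet> v = xa_of g \<bullet> xa_of v + xu_of g \<bullet> xu_of v"
  unfolding inner_vec_def xa_of_def xu_of_def by (simp add: sum_UNIV_Plus)

lemma xa_of_matrix_vector_mult: "xa_of (A *v g) = blk_aa A *v xa_of g + blk_au A *v xu_of g"
  unfolding xa_of_def xu_of_def blk_aa_def blk_au_def matrix_vector_mult_def
  by (simp add: vec_eq_iff sum_UNIV_Plus)

lemma xa_of_col_au [simp]: "xa_of (col_au a b) = a"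
  by (simp add: xa_of_def col_au_def vec_eq_iff)

lemma xu_of_col_au [simp]: "xu_of (col_au a b) = b"
  by (simp add: xu_of_def col_au_def vec_eq_iff)

lemma xa_of_add [simp]: "xa_of (a + b) = xa_of a + xa_of b"
  by (simp add: xa_of_def vec_eq_iff)

lemma xa_of_diff [simp]: "xa_of (a - b) = xa_of a - xa_of b"
  by (simp add: xa_of_def vec_eq_iff)

lemma xa_of_zero [simp]: "xa_of 0 = 0"
  by (simp add: xa_of_def vec_eq_iff)

lemma xu_of_zero [simp]: "xu_of 0 = 0"
  by (simp add: xu_of_def vec_eq_iff)

lemma col_au_zero [simp]: "col_au 0 0 = 0"
  by (simp add: col_au_def vec_eq_iff split: sum.splits)

lemma col_au_split: "g = col_au (xa_of g) 0 + col_au 0 (xu_of g)"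
  by (simp add: vec_eq_iff col_au_def xa_of_def xu_of_def split: sum.splits)

lemma inner_col_au_actuated: "col_au a 0 \<bullet> (A *v g) = a \<bullet> xa_of (A *v g)"
  by (subst inner_split_au) simp

lemma quadratic_form_split_au:
  fixes A :: "real^('m::finite+'s::finite)^('m+'s)"
  assumes "transpose A = A"
  shows "g \<bullet> (A *v g) = xa_of g \<bullet> (blk_aa A *v xa_of g) + 2 * (xa_of g \<bullet> (blk_au A *v xu_of g))
     + col_au 0 (xu_of g) \<bullet> (A *v col_au 0 (xu_of g))"
proof -
  let ?a = "col_au (xa_of g) 0 :: real^('m+'s)" and ?u = "col_au 0 (xu_of g) :: real^('m+'s)"
  have "g \<bullet> (A *v g) = (?a + ?u) \<bullet> (A *v (?a + ?u))" by (simp only: col_au_split[of g, symmetric])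
  also have "\<dots> = ?a \<bullet> (A *v ?a) + ?a \<bullet> (A *v ?u) + ?u \<bullet> (A *v ?a) + ?u \<bullet> (A *v ?u)"
    by (simp add: matrix_vector_right_distrib inner_add_left inner_add_right)
  also have "?u \<bullet> (A *v ?a) = ?a \<bullet> (A *v ?u)" by (rule symmetric_inner_swap[OF assms])
  finally show ?thesis by (simp add: inner_col_au_actuated xa_of_matrix_vector_mult)
qed

lemma skew_blk_aa_quadratic_form_zero:
  fixes A :: "real^('m::finite+'s::finite)^('m+'s)"
  assumes "transpose A = - A"
  shows "a \<bullet> (blk_aa A *v a) = 0"
  using skew_quadratic_form_zero[OF assms, of "col_au a 0"]
  by (simp add: inner_col_au_actuated xa_of_matrix_vector_mult)

section \<open>The closed loop\<close>

lemma Jc1_minus_Rc1: "Jc1 Gd x - Rc1 Gd x = Gd x"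
proof -
  have "Jc1 Gd x - Rc1 Gd x = (1/2) *\<^sub>R (Gd x - transpose (Gd x)) + (1/2) *\<^sub>R (Gd x + transpose (Gd x))"
    by (simp add: Jc1_def Rc1_def)
  also have "\<dots> = (1/2 + 1/2) *\<^sub>R Gd x"
    by (simp only: scaleR_add_right scaleR_diff_right scaleR_add_left) simp
  finally show ?thesis by simp
qed

lemma control_u_eq:
  "control_u J R Gd Ki Rc2 gradH x (xa_of x - c) =
     - (blk_aa (J x) *v xa_of (gradH x)) + blk_aa (R x) *v xa_of (gradH x) + Gd x *v xa_of (gradH x)
     - Rc2 *v xa_of (gradH x) + Gd x *v (Ki *v c) + 2 *\<^sub>R (blk_au (R x) *v xu_of (gradH x))"
proof -
  have "Jc1 Gd x *v v - Rc1 Gd x *v v = Gd x *v v" for v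
    by (metis Jc1_minus_Rc1 matrix_vector_mult_diff_rdistrib)
  then show ?thesis unfolding control_u_def
    by (simp add: Jc1_minus_Rc1 matrix_vector_mult_add_rdistrib matrix_vector_mult_diff_rdistrib
        uminus_matrix_vector_mult)
qed

lemma closed_loop_snd:
  assumes "Ki *v wb = dbar"
  shows "snd (closed_loop J R Gd dbar Ki Rc2 gradH w) =
     Gd (fst w) *v (xa_of (gradH (fst w)) + Ki *v (snd w - wb))"
proof -
  obtain x c where w: "w = (x, c)" by (cases w)
  have "xa_of ((J x - R x) *v gradH x) = blk_aa (J x) *v xa_of (gradH x) + blk_au (J x) *v xu_of (gradH x)
     - blk_aa (R x) *v xa_of (gradH x) - blk_au (R x) *v xu_of (gradH x)"
    by (simp add: matrix_vector_mult_diff_rdistrib xa_of_matrix_vector_mult)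
  then show ?thesis
    unfolding w closed_loop_def Let_def plant_field_def controller_field_def
    using assms
    by (simp add: control_u_eq matrix_vector_mult_add_rdistrib matrix_vector_mult_diff_rdistrib
        matrix_vector_right_distrib matrix_vector_mult_diff_distrib algebra_simps scaleR_2)
qed

lemma closed_loop_power_balance:
  assumes "Ki *v wb = dbar"
    and J_skew: "transpose (J (fst w)) = - J (fst w)" and R_sym: "transpose (R (fst w)) = R (fst w)"
  shows "gradH (fst w) \<bullet> fst (closed_loop J R Gd dbar Ki Rc2 gradH w) =
     - (col_au 0 (xu_of (gradH (fst w))) \<bullet> (R (fst w) *v col_au 0 (xu_of (gradH (fst w)))))
     - xa_of (gradH (fst w)) \<bullet> (Rc2 *v xa_of (gradH (fst w)))
     + xa_of (gradH (fst w)) \<bullet> (Gd (fst w) *v (xa_of (gradH (fst w)) + Ki *v (snd w - wb)))"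
proof -
  obtain x c where w: "w = (x, c)" by (cases w)
  let ?g = "gradH x"
  have "?g \<bullet> col_au v 0 = xa_of ?g \<bullet> v" for v by (subst inner_split_au) simp
  then have "?g \<bullet> fst (closed_loop J R Gd dbar Ki Rc2 gradH (x, c)) =
      ?g \<bullet> (J x *v ?g) - ?g \<bullet> (R x *v ?g) + xa_of ?g \<bullet> (control_u J R Gd Ki Rc2 gradH x (xa_of x - c) - Gd x *v dbar)"
    unfolding closed_loop_def Let_def plant_field_def
    by (simp add: matrix_vector_mult_diff_rdistrib inner_add_right inner_diff_right)
  also have "\<dots> = - (col_au 0 (xu_of ?g) \<bullet> (R x *v col_au 0 (xu_of ?g)))
     - xa_of ?g \<bullet> (Rc2 *v xa_of ?g) + xa_of ?g \<bullet> (Gd x *v (xa_of ?g + Ki *v (c - wb)))"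
    using assms skew_quadratic_form_zero[of "J x" ?g] skew_blk_aa_quadratic_form_zero[of "J x" "xa_of ?g"]
      quadratic_form_split_au[of "R x" ?g]
    by (simp add: w control_u_eq inner_add_right inner_diff_right matrix_vector_right_distrib
        matrix_vector_mult_diff_distrib inner_minus_right inner_scaleR_right algebra_simps)
  finally show ?thesis using w by simp
qed

locale ph_integral_control =
  fixes H :: "real^('m::finite + 's::finite) \<Rightarrow> real"
    and gradH :: "real^('m + 's) \<Rightarrow> real^('m + 's)"
    and J R :: "real^('m + 's) \<Rightarrow> real^('m + 's)^('m + 's)"
    and Gd :: "real^('m + 's) \<Rightarrow> real^'m^'m"
    and dbar :: "real^'m"
    and Ki Rc2 :: "real^'m^'m"
    and xstar :: "real^('m + 's)"
  assumes H_nonneg: "\<And>x. H x \<ge> 0"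
    and H_grad: "\<And>x. (H has_derivative (\<lambda>h. gradH x \<bullet> h)) (at x)"
    and gradH_cont: "continuous_on UNIV gradH"
    and H_isolated_min: "\<exists>r>0. \<forall>x. 0 < norm (x - xstar) \<and> norm (x - xstar) < r \<longrightarrow> H xstar < H x"
    and J_cont: "continuous_on UNIV J" and J_skew: "\<And>x. transpose (J x) = - J x"
    and R_cont: "continuous_on UNIV R" and R_sym: "\<And>x. transpose (R x) = R x"
    and R_psd: "\<And>x. pos_semidef (R x)"
    and Gd_cont: "continuous_on UNIV Gd" and Gd_neg: "\<And>x. neg_def (Gd x)"
    and Ki_sym: "transpose Ki = Ki" and Ki_pd: "pos_def Ki"
    and Rc2_pd: "pos_def Rc2"
begin

abbreviation "cl \<equiv> closed_loop J R Gd dbar Ki Rc2 gradH"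
abbreviation "wbar \<equiv> matrix_inv Ki *v dbar"

definition Hcl :: "(real^('m + 's)) \<times> (real^'m) \<Rightarrow> real" where
  "Hcl w = H (fst w) + (1/2) * ((snd w - wbar) \<bullet> (Ki *v (snd w - wbar)))"

definition dHcl :: "(real^('m + 's)) \<times> (real^'m) \<Rightarrow> (real^('m + 's)) \<times> (real^'m) \<Rightarrow> real" where
  "dHcl w h = gradH (fst w) \<bullet> fst h + (Ki *v (snd w - wbar)) \<bullet> snd h"

lemma Ki_wbar: "Ki *v wbar = dbar"
  by (rule pos_def_matrix_inv_right[OF Ki_pd])

lemma gradH_xstar: "gradH xstar = 0"
proof -
  obtain r where "r > 0" and r: "\<And>x. 0 < norm (x - xstar) \<Longrightarrow> norm (x - xstar) < r \<Longrightarrow> H xstar < H x"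
    using H_isolated_min by blast
  have "\<forall>y\<in>ball xstar r. H xstar \<le> H y"
    using r by (metis dist_norm le_less mem_ball norm_minus_commute zero_less_norm_iff right_minus_eq)
  then have "(\<lambda>h. gradH xstar \<bullet> h) = (\<lambda>h. 0)"
    using \<open>r > 0\<close> by (intro differential_zero_maxmin[of xstar "ball xstar r" H, OF _ _ H_grad]) auto
  then have "gradH xstar \<bullet> gradH xstar = 0" by metis
  then show ?thesis by simp
qed

lemma cl_continuous: "continuous_on UNIV cl"
  unfolding closed_loop_def Let_def plant_field_def control_u_def controller_field_def Jc1_def Rc1_def
  by (intro continuous_intros continuous_on_compose2[OF J_cont] continuous_on_compose2[OF R_cont]
      continuous_on_compose2[OF Gd_cont] continuous_on_compose2[OF gradH_cont]) auto

lemma Hcl_has_derivative: "(Hcl has_derivative dHcl w) (at w)"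
proof -
  have "((\<lambda>w. snd w - wbar) has_derivative snd) (at w)"
    by (auto intro!: derivative_eq_intros)
  then have "((\<lambda>w. (snd w - wbar) \<bullet> (Ki *v (snd w - wbar))) has_derivative
      (\<lambda>h. (snd w - wbar) \<bullet> (Ki *v snd h) + snd h \<bullet> (Ki *v (snd w - wbar)))) (at w)"
    by (intro has_derivative_inner bounded_linear.has_derivative[OF matrix_vector_mul_bounded_linear])
  moreover have "((\<lambda>w. H (fst w)) has_derivative (\<lambda>h. gradH (fst w) \<bullet> fst h)) (at w)"
    by (rule has_derivative_compose[OF has_derivative_fst[OF has_derivative_ident] H_grad])
  ultimately have "(Hcl has_derivative (\<lambda>h. gradH (fst w) \<bullet> fst h
      + (1/2) * ((snd w - wbar) \<bullet> (Ki *v snd h) + snd h \<bullet> (Ki *v (snd w - wbar))))) (at w)"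
    unfolding Hcl_def[abs_def] by (intro has_derivative_add has_derivative_mult_right)
  moreover have "(\<lambda>h. gradH (fst w) \<bullet> fst h
      + (1/2) * ((snd w - wbar) \<bullet> (Ki *v snd h) + snd h \<bullet> (Ki *v (snd w - wbar)))) = dHcl w"
    using symmetric_inner_swap[OF Ki_sym, of "snd w - wbar"] by (simp add: dHcl_def fun_eq_iff inner_commute)
  ultimately show ?thesis by simp
qed

lemma dHcl_cl:
  "dHcl w (cl w) =
     (xa_of (gradH (fst w)) + Ki *v (snd w - wbar)) \<bullet> (Gd (fst w) *v (xa_of (gradH (fst w)) + Ki *v (snd w - wbar)))
     - xa_of (gradH (fst w)) \<bullet> (Rc2 *v xa_of (gradH (fst w)))
     - col_au 0 (xu_of (gradH (fst w))) \<bullet> (R (fst w) *v col_au 0 (xu_of (gradH (fst w))))"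
  using closed_loop_power_balance[where J = J and R = R and w = w, OF Ki_wbar J_skew R_sym]
  by (simp add: dHcl_def closed_loop_snd[OF Ki_wbar] inner_add_left algebra_simps)

lemma dHcl_cl_nonpos: "dHcl w (cl w) \<le> 0"
  using neg_def_quadratic_form_nonpos[OF Gd_neg] pos_def_quadratic_form_nonneg[OF Rc2_pd]
    R_psd[unfolded pos_semidef_def]
  by (simp add: dHcl_cl) (smt (verit))

lemma output_zero_if_dHcl_cl_zero:
  assumes "dHcl w (cl w) = 0"
  shows "(xa_of (gradH (fst w)), snd w - wbar) = 0"
proof -
  let ?a = "xa_of (gradH (fst w))" and ?z = "Ki *v (snd w - wbar)"
  have "(?a + ?z) \<bullet> (Gd (fst w) *v (?a + ?z)) = 0" and "?a \<bullet> (Rc2 *v ?a) = 0"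
    using assms neg_def_quadratic_form_nonpos[OF Gd_neg] pos_def_quadratic_form_nonneg[OF Rc2_pd]
      R_psd[of "fst w", unfolded pos_semidef_def, rule_format, of "col_au 0 (xu_of (gradH (fst w)))"]
    unfolding dHcl_cl by (smt (verit))+
  then have "?a + ?z = 0" and "?a = 0"
    using neg_def_quadratic_form_eq_0_iff[OF Gd_neg] pos_def_quadratic_form_eq_0_iff[OF Rc2_pd]
    by blast+
  then have "?a = 0" and "?z = 0" by simp_all
  then show ?thesis
    using pos_def_quadratic_form_eq_0_iff[OF Ki_pd, of "snd w - wbar"] by (simp add: zero_prod_def)
qed

lemma equilibrium_cl: "equilibrium cl (xstar, wbar)"
proof -
  have "snd (cl (xstar, wbar)) = 0"
    by (simp add: closed_loop_snd[OF Ki_wbar] gradH_xstar)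
  moreover have "fst (cl (xstar, wbar)) = 0"
    unfolding closed_loop_def Let_def plant_field_def control_u_def controller_field_def
    by (simp add: gradH_xstar Ki_wbar Jc1_minus_Rc1 flip: matrix_vector_mult_diff_rdistrib)
  ultimately show ?thesis by (simp add: equilibrium_def prod_eq_iff)
qed

lemma Hcl_strict_local_min:
  "\<exists>r>0. \<forall>w. 0 < norm (w - (xstar, wbar)) \<and> norm (w - (xstar, wbar)) < r \<longrightarrow> Hcl (xstar, wbar) < Hcl w"
proof -
  obtain r where "r > 0" and r: "\<And>x. 0 < norm (x - xstar) \<Longrightarrow> norm (x - xstar) < r \<Longrightarrow> H xstar < H x"
    using H_isolated_min by blast
  have less: "Hcl (xstar, wbar) < Hcl (x, c)"
    if "0 < norm ((x, c) - (xstar, wbar))" "norm ((x, c) - (xstar, wbar)) < r" for x c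
  proof (cases "x = xstar")
    case True
    then have "c - wbar \<noteq> 0" using that by auto
    then show ?thesis
      using True Ki_pd by (simp add: Hcl_def pos_def_def)
  next
    case False
    then have "H xstar < H x"
      using r that norm_fst_le[of "x - xstar" "c - wbar"] by simp
    then show ?thesis using pos_def_quadratic_form_nonneg[OF Ki_pd, of "c - wbar"] by (simp add: Hcl_def)
  qed
  show ?thesis
  proof (intro exI[of _ r] conjI allI impI)
    fix w assume "0 < norm (w - (xstar, wbar)) \<and> norm (w - (xstar, wbar)) < r"
    then show "Hcl (xstar, wbar) < Hcl w" using less[of "fst w" "snd w"] by simp
  qed (rule \<open>r > 0\<close>)
qed

lemma lyap_stable_cl: "lyap_stable cl (xstar, wbar)"
  by (rule lyap_stable_if_lyapunov[OF Hcl_has_derivative dHcl_cl_nonpos Hcl_strict_local_min])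

lemma Hcl_nonincreasing:
  assumes "ode_sol_on cl T w" and "t \<in> {0..T}"
  shows "Hcl (w t) \<le> Hcl (w 0)"
  using assms unfolding ode_sol_on_def
  by (intro lyapunov_nonincreasing[OF Hcl_has_derivative dHcl_cl_nonpos, of 0 t _ "{0..T}"]) auto

lemma cl_tendsto_if_detectable:
  assumes det: "detectable cl (\<lambda>w. (xa_of (gradH (fst w)), snd w - wbar)) (xstar, wbar)"
    and sol: "ode_sol cl w" and "compact K" and in_K: "\<And>t. t \<ge> 0 \<Longrightarrow> w t \<in> K"
  shows "(w \<longlongrightarrow> (xstar, wbar)) at_top"
proof (rule lasalle_convergence[OF cl_continuous Hcl_has_derivative dHcl_cl_nonpos lyap_stable_cl _ sol
      \<open>compact K\<close> in_K])
  fix y assume "ode_sol cl y" and "\<And>t. t \<ge> 0 \<Longrightarrow> dHcl (y t) (cl (y t)) = 0"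
  then show "(y \<longlongrightarrow> (xstar, wbar)) at_top"
    using det output_zero_if_dHcl_cl_zero unfolding detectable_def by blast
qed

lemma asympt_stable_cl_if_detectable:
  assumes det: "detectable cl (\<lambda>w. (xa_of (gradH (fst w)), snd w - wbar)) (xstar, wbar)"
  shows "asympt_stable cl (xstar, wbar)"
proof -
  obtain \<delta> where "\<delta> > 0" and \<delta>: "\<And>T w. ode_sol_on cl T w \<Longrightarrow> norm (w 0 - (xstar, wbar)) < \<delta> \<Longrightarrow>
      \<forall>t\<in>{0..T}. norm (w t - (xstar, wbar)) < 1"
    using lyap_stable_cl zero_less_one unfolding lyap_stable_def by metis
  have "(w \<longlongrightarrow> (xstar, wbar)) at_top" if sol: "ode_sol cl w" and w0: "norm (w 0 - (xstar, wbar)) < \<delta>" for w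
  proof (rule cl_tendsto_if_detectable[OF det sol compact_cball])
    fix t :: real assume "t \<ge> 0"
    then show "w t \<in> cball (xstar, wbar) 1"
      using bspec[OF \<delta>[OF ode_sol_imp_ode_sol_on[OF sol, of t] w0], of t] by (simp add: dist_norm norm_minus_commute)
  qed
  then show ?thesis unfolding asympt_stable_def using lyap_stable_cl \<open>\<delta> > 0\<close> by blast
qed

lemma Hcl_sublevel_bounded:
  assumes "radially_unbounded H"
  obtains B where "\<And>w. Hcl w \<le> c \<Longrightarrow> norm w \<le> B"
proof -
  obtain \<rho> where \<rho>: "\<And>x. \<rho> \<le> norm x \<Longrightarrow> c < H x"
    using assms unfolding radially_unbounded_def filterlim_at_top_dense eventually_at_infinity by blast
  obtain l where "l > 0" and l: "\<And>v. l * (norm v)\<^sup>2 \<le> v \<bullet> (Ki *v v)"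
    using pos_def_quadratic_lower_bound[OF Ki_pd] by blast
  have "norm (x, v) \<le> \<rho> + norm wbar + 1 + 2 * c / l" if "Hcl (x, v) \<le> c" for x v
  proof -
    have "H x \<le> c" using that pos_def_quadratic_form_nonneg[OF Ki_pd, of "v - wbar"] by (simp add: Hcl_def)
    then have "norm x \<le> \<rho>" using \<rho>[of x] by linarith
    have "l * (norm (v - wbar))\<^sup>2 \<le> 2 * c"
      using that H_nonneg[of x] l[of "v - wbar"] by (simp add: Hcl_def)
    then have "(norm (v - wbar))\<^sup>2 \<le> 2 * c / l" using \<open>l > 0\<close> by (simp add: field_simps)
    moreover have "n \<le> 1 + n\<^sup>2" for n :: real
      using zero_le_power2[of "n - 1"] by (simp add: power2_diff) (smt (verit) zero_le_power2)
    ultimately have "norm (v - wbar) \<le> 1 + 2 * c / l" by (smt (verit))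
    then show ?thesis
      using norm_Pair_le[of x v] norm_triangle_ineq[of wbar "v - wbar"] \<open>norm x \<le> \<rho>\<close> by simp
  qed
  then show ?thesis using that by (metis prod.collapse)
qed

lemma glob_stable_cl_if_radially_unbounded:
  assumes "radially_unbounded H"
  shows "glob_stable cl (xstar, wbar)"
  unfolding glob_stable_def
proof (intro conjI lyap_stable_cl allI)
  fix w0
  obtain B where "\<And>w. Hcl w \<le> Hcl w0 \<Longrightarrow> norm w \<le> B"
    using Hcl_sublevel_bounded[OF assms] by blast
  then show "\<exists>B. \<forall>T w. ode_sol_on cl T w \<and> w 0 = w0 \<longrightarrow> (\<forall>t\<in>{0..T}. norm (w t) \<le> B)"
    using Hcl_nonincreasing by blast
qed

lemma glob_asympt_stable_cl_if_detectable:
  assumes "radially_unbounded H"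
    and det: "detectable cl (\<lambda>w. (xa_of (gradH (fst w)), snd w - wbar)) (xstar, wbar)"
  shows "glob_asympt_stable cl (xstar, wbar)"
  unfolding glob_asympt_stable_def
proof (intro conjI lyap_stable_cl allI impI)
  fix w assume sol: "ode_sol cl w"
  obtain B where B: "\<And>p. Hcl p \<le> Hcl (w 0) \<Longrightarrow> norm p \<le> B"
    using Hcl_sublevel_bounded[OF assms(1)] by blast
  show "(w \<longlongrightarrow> (xstar, wbar)) at_top"
  proof (rule cl_tendsto_if_detectable[OF det sol compact_cball[of 0 B]])
    fix t :: real assume "t \<ge> 0"
    then show "w t \<in> cball 0 B"
      using B Hcl_nonincreasing[OF ode_sol_imp_ode_sol_on[OF sol], of t t] by simp
  qed
qed

end

theorem proposition2:
  fixes H :: "real^('m::finite + 's::finite) \<Rightarrow> real"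
    and gradH :: "real^('m + 's) \<Rightarrow> real^('m + 's)"
    and J R :: "real^('m + 's) \<Rightarrow> real^('m + 's)^('m + 's)"
    and Gd :: "real^('m + 's) \<Rightarrow> real^'m^'m"
    and dbar :: "real^'m"
    and Ki Rc2 :: "real^'m^'m"
    and xstar :: "real^('m + 's)"
  assumes H_smooth: "smooth_fun H"
    and H_nonneg: "\<forall>x. H x \<ge> 0"
    and H_grad: "\<forall>x. (H has_derivative (\<lambda>h. gradH x \<bullet> h)) (at x)"
    and H_isolated_min: "\<exists>r>0. \<forall>x. 0 < norm (x - xstar) \<and> norm (x - xstar) < r \<longrightarrow> H xstar < H x"
    and J_smooth: "smooth_mat J" and J_skew: "\<forall>x. transpose (J x) = - J x"
    and R_smooth: "smooth_mat R" and R_sym: "\<forall>x. transpose (R x) = R x"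
    and R_psd: "\<forall>x. pos_semidef (R x)"
    and Gd_smooth: "smooth_mat Gd"
    and Gd_full_rank: "\<forall>x. rank (Gd x) = CARD('m)"
    and Gd_neg: "\<forall>x. neg_def (Gd x)"
    and Ki_sym: "transpose Ki = Ki" and Ki_pd: "pos_def Ki"
    and Rc2_pd: "pos_def Rc2"
  shows "equilibrium (closed_loop J R Gd dbar Ki Rc2 gradH) (xstar, matrix_inv Ki *v dbar)
       \<and> lyap_stable (closed_loop J R Gd dbar Ki Rc2 gradH) (xstar, matrix_inv Ki *v dbar)
       \<and> (detectable (closed_loop J R Gd dbar Ki Rc2 gradH)
            (\<lambda>w. (xa_of (gradH (fst w)), snd w - matrix_inv Ki *v dbar))
            (xstar, matrix_inv Ki *v dbar)
          \<longrightarrow> asympt_stable (closed_loop J R Gd dbar Ki Rc2 gradH) (xstar, matrix_inv Ki *v dbar))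
       \<and> (radially_unbounded H \<longrightarrow>
            glob_stable (closed_loop J R Gd dbar Ki Rc2 gradH) (xstar, matrix_inv Ki *v dbar)
          \<and> (detectable (closed_loop J R Gd dbar Ki Rc2 gradH)
               (\<lambda>w. (xa_of (gradH (fst w)), snd w - matrix_inv Ki *v dbar))
               (xstar, matrix_inv Ki *v dbar)
             \<longrightarrow> glob_asympt_stable (closed_loop J R Gd dbar Ki Rc2 gradH) (xstar, matrix_inv Ki *v dbar)))"
proof -
  interpret ph_integral_control H gradH J R Gd dbar Ki Rc2 xstar
  proof
    show "continuous_on UNIV gradH"
      using continuous_on_gradient_if_smooth[OF H_smooth] H_grad by blast
  qed (use H_nonneg H_grad H_isolated_min J_skew R_sym R_psd Gd_neg Ki_sym Ki_pd Rc2_pd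
      J_smooth R_smooth Gd_smooth in \<open>auto intro: continuous_on_if_smooth_mat\<close>)
  show ?thesis
    using equilibrium_cl lyap_stable_cl asympt_stable_cl_if_detectable
      glob_stable_cl_if_radially_unbounded glob_asympt_stable_cl_if_detectable
    by blast
qed

end
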